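(* There exist a game $\Gamma$ and a principal utility function $U_0$ such that the optimal principal objective value over all $0$-CEPs of $\Gamma$ is strictly greater than the optimal objective value over those $0$-CEPs $(\mu,P)$ in which each $P_i(s,a)$ depends only on $a$ (and not on the signal profile $s$).
   Context: $\Gamma$ has agents $i\in[n]$, finite action sets $A_i$, $A=\prod_iA_i$, utilities $U_i:A\to\mathbb{R}$; principal utility $U_0$ on $A$ (values may be real or $-\infty$). A correlated profile with payments is $(\mu,P)$ with $\mu\in\Delta(A)$, $P_i:A\times A\to\mathbb{R}_+$ ($P_i(s,a)$ = payment to $i$ under recommendation $s$ and played profile $a$). Its objective value is $\mathbb{E}_{a\sim\mu}[U_0(a)-\sum_iP_i(a,a)]$. It is a $0$-CEP if for every $i$ and $\phi_i:A_i\to A_i$, $\mathbb{E}_{a\sim\mu}[U_i(\phi_i(a_i),a_{-i})+P_i(a,(\phi_i(a_i),a_{-i}))-U_i(a)-P_i(a,a)]\le0$. *)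

theory Defs
  imports "HOL-Analysis.Analysis"
begin

text \<open>Agents are 0..n-1; actions are encoded as naturals; agent i has action set
  Act i; action profiles are extensional functions in PiE {..<n} Act.\<close>

type_synonym profile = "nat \<Rightarrow> nat"

definition profiles :: "nat \<Rightarrow> (nat \<Rightarrow> nat set) \<Rightarrow> profile set" where
  "profiles n Act = PiE {..<n} Act"

definition is_game :: "nat \<Rightarrow> (nat \<Rightarrow> nat set) \<Rightarrow> bool" where
  "is_game n Act \<longleftrightarrow> (\<forall>i<n. finite (Act i) \<and> Act i \<noteq> {})"

text \<open>(mu, P) is a correlated profile with payments: mu a probability distribution
  on profiles, P i s a \<ge> 0 the payment to i under recommendation s and play a.\<close>
definition is_cpp ::
  "nat \<Rightarrow> (nat \<Rightarrow> nat set) \<Rightarrow> (profile \<Rightarrow> real) \<Rightarrow> (nat \<Rightarrow> profile \<Rightarrow> profile \<Rightarrow> real) \<Rightarrow> bool" where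
  "is_cpp n Act mu P \<longleftrightarrow>
     (\<forall>a\<in>profiles n Act. mu a \<ge> 0) \<and> (\<Sum>a\<in>profiles n Act. mu a) = 1 \<and>
     (\<forall>i<n. \<forall>s\<in>profiles n Act. \<forall>a\<in>profiles n Act. P i s a \<ge> 0)"

definition is_0CEP ::
  "nat \<Rightarrow> (nat \<Rightarrow> nat set) \<Rightarrow> (nat \<Rightarrow> profile \<Rightarrow> real) \<Rightarrow>
   (profile \<Rightarrow> real) \<Rightarrow> (nat \<Rightarrow> profile \<Rightarrow> profile \<Rightarrow> real) \<Rightarrow> bool" where
  "is_0CEP n Act U mu P \<longleftrightarrow> is_cpp n Act mu P \<and>
     (\<forall>i<n. \<forall>phi. phi ` Act i \<subseteq> Act i \<longrightarrow>
        (\<Sum>a\<in>profiles n Act. mu a *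
            (U i (a(i := phi (a i))) + P i a (a(i := phi (a i))) - U i a - P i a a)) \<le> 0)"

text \<open>Objective E_mu[U0(a) - sum_i P_i(a,a)], in extended reals (U0 may be -\<infinity>;
  zero-probability profiles contribute 0).\<close>
definition objective ::
  "nat \<Rightarrow> (nat \<Rightarrow> nat set) \<Rightarrow> (profile \<Rightarrow> ereal) \<Rightarrow>
   (profile \<Rightarrow> real) \<Rightarrow> (nat \<Rightarrow> profile \<Rightarrow> profile \<Rightarrow> real) \<Rightarrow> ereal" where
  "objective n Act U0 mu P =
     (\<Sum>a\<in>profiles n Act. ereal (mu a) * (U0 a - ereal (\<Sum>i<n. P i a a)))"

definition signal_independent ::
  "nat \<Rightarrow> (nat \<Rightarrow> nat set) \<Rightarrow> (nat \<Rightarrow> profile \<Rightarrow> profile \<Rightarrow> real) \<Rightarrow> bool" where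
  "signal_independent n Act P \<longleftrightarrow>
     (\<forall>i<n. \<forall>s\<in>profiles n Act. \<forall>s'\<in>profiles n Act. \<forall>a\<in>profiles n Act. P i s a = P i s' a)"

definition opt_value where
  "opt_value n Act U U0 = (SUP (mu, P) \<in> {(mu, P). is_0CEP n Act U mu P}. objective n Act U0 mu P)"

definition opt_value_sigind where
  "opt_value_sigind n Act U U0 =
     (SUP (mu, P) \<in> {(mu, P). is_0CEP n Act U mu P \<and> signal_independent n Act P}.
        objective n Act U0 mu P)"

end

theory Submission
  imports Defs
begin

text \<open>Take matching pennies on actions \<open>{0, 1}\<close> (agent 0 wants to mismatch, agent 1 to match)
  and let the principal forbid the profile \<open>(0, 1)\<close> by giving it utility \<open>-\<infinity>\<close>; elsewhere the
  principal gets 1. Playing \<open>(0,0), (1,0), (1,1)\<close> with probability 1/3 each is then a 0-CEP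
  once agent 0 is paid 1 for obeying the signal \<open>(0,0)\<close>: the payment is attached to the signal,
  so an agent 0 who was told \<open>(1,0)\<close> and deviates into \<open>(0,0)\<close> does not collect it. The
  objective is 2/3. If the payment may depend on the played profile only, it also rewards that
  deviation; the three constant deviations then force an expected total payment of at least
  1/2, so the objective is at most 1/2.\<close>

lemma is_0CEP_constant_deviation:
  assumes "is_0CEP n Act U mu P" "i < n" "x \<in> Act i"
  shows "(\<Sum>a\<in>profiles n Act. mu a * (U i (a(i := x)) + P i a (a(i := x)) - U i a - P i a a)) \<le> 0"
proof -
  have "(\<lambda>_. x) ` Act i \<subseteq> Act i" using assms(3) by blast
  then show ?thesis using assms(1,2) unfolding is_0CEP_def by blast
qed

lemma is_0CEP_signal_independent_constant_deviation:
  assumes "is_0CEP n Act U mu P" "signal_independent n Act P" "i < n" "x \<in> Act i"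
  shows "(\<Sum>a\<in>profiles n Act.
            mu a * (U i (a(i := x)) + P i (a(i := x)) (a(i := x)) - U i a - P i a a)) \<le> 0"
proof -
  have "P i a (a(i := x)) = P i (a(i := x)) (a(i := x))" if "a \<in> profiles n Act" for a
  proof -
    have "a(i := x) \<in> profiles n Act"
      using PiE_fun_upd[of x Act i a "{..<n}"] assms(4) that assms(3) insert_absorb[of i "{..<n}"]
      by (simp add: profiles_def)
    then show ?thesis using assms(2,3) that unfolding signal_independent_def by blast
  qed
  then show ?thesis
    using is_0CEP_constant_deviation[OF assms(1,3,4)] by (simp cong: sum.cong)
qed

text \<open>Profiles are extensional on the agents \<open>{0, 1}\<close>, hence \<open>undefined\<close> elsewhere.\<close>
definition prof2 :: "nat \<Rightarrow> nat \<Rightarrow> profile" where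
  "prof2 x y = (\<lambda>k. if k = 0 then x else if k = 1 then y else undefined)"

lemma prof2_apply [simp]: "prof2 x y 0 = x" "prof2 x y (Suc 0) = y"
  by (simp_all add: prof2_def)

lemma prof2_update [simp]: "(prof2 x y)(0 := z) = prof2 z y" "(prof2 x y)(Suc 0 := z) = prof2 x z"
  by (auto simp: prof2_def fun_eq_iff)

lemma prof2_eq_iff [simp]: "prof2 x y = prof2 x' y' \<longleftrightarrow> x = x' \<and> y = y'"
  by (metis prof2_apply)

definition binary_actions :: "nat \<Rightarrow> nat set" where
  "binary_actions = (\<lambda>_. {0, 1})"

lemma profiles_binary: "profiles 2 binary_actions = {prof2 0 0, prof2 0 1, prof2 1 0, prof2 1 1}"
proof
  show "profiles 2 binary_actions \<subseteq> {prof2 0 0, prof2 0 1, prof2 1 0, prof2 1 1}"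
  proof
    fix f assume f: "f \<in> profiles 2 binary_actions"
    have "f = prof2 (f 0) (f 1)"
    proof
      fix k :: nat
      consider "k = 0" | "k = 1" | "k \<ge> 2" by linarith
      then show "f k = prof2 (f 0) (f 1) k"
        using f by cases (auto simp: prof2_def profiles_def PiE_iff extensional_def)
    qed
    moreover have "f 0 \<in> {0, 1}" "f 1 \<in> {0, 1}"
      using f by (auto simp: profiles_def binary_actions_def PiE_iff)
    ultimately show "f \<in> {prof2 0 0, prof2 0 1, prof2 1 0, prof2 1 1}"
      by (metis insert_iff singletonD)
  qed
  show "{prof2 0 0, prof2 0 1, prof2 1 0, prof2 1 1} \<subseteq> profiles 2 binary_actions"
    by (auto simp: profiles_def binary_actions_def PiE_iff extensional_def prof2_def)
qed

lemma sum_profiles_binary: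
  "(\<Sum>a\<in>profiles 2 binary_actions. f a) = f (prof2 0 0) + f (prof2 0 1) + f (prof2 1 0) + f (prof2 1 1)"
  by (simp add: profiles_binary add.assoc)

definition pennies_utility :: "nat \<Rightarrow> profile \<Rightarrow> real" where
  "pennies_utility i a =
     (if i = 0 then (if a 0 \<noteq> a 1 then 1 else 0) else (if a 0 = a 1 then 1 else 0))"

definition principal_utility :: "profile \<Rightarrow> ereal" where
  "principal_utility a = (if a = prof2 0 1 then -\<infinity> else 1)"

definition witness_mu :: "profile \<Rightarrow> real" where
  "witness_mu a = (if a = prof2 0 1 then 0 else 1/3)"

definition witness_payment :: "nat \<Rightarrow> profile \<Rightarrow> profile \<Rightarrow> real" where
  "witness_payment i s a = (if i = 0 \<and> s = prof2 0 0 \<and> a = prof2 0 0 then 1 else 0)"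

lemma witness_is_0CEP: "is_0CEP 2 binary_actions pennies_utility witness_mu witness_payment"
proof -
  have "(\<Sum>a\<in>profiles 2 binary_actions. witness_mu a *
          (pennies_utility i (a(i := phi (a i))) + witness_payment i a (a(i := phi (a i)))
            - pennies_utility i a - witness_payment i a a)) \<le> 0"
    if "i < 2" "phi ` binary_actions i \<subseteq> binary_actions i" for i phi
  proof -
    have "phi 0 \<in> {0, 1}" "phi 1 \<in> {0, 1}" "i = 0 \<or> i = 1"
      using that by (auto simp: binary_actions_def)
    then show ?thesis
      by (auto simp: sum_profiles_binary witness_mu_def witness_payment_def pennies_utility_def)
  qed
  then show ?thesis
    by (auto simp: is_0CEP_def is_cpp_def sum_profiles_binary witness_mu_def witness_payment_def)
qed

lemma witness_objective:
  "objective 2 binary_actions principal_utility witness_mu witness_payment = ereal (2/3)"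
proof -
  have "(1::ereal) - ereal 1 = 0" "ereal (1/3) + ereal (1/3) = ereal (2/3)"
    by (simp_all add: one_ereal_def)
  then show ?thesis
    by (simp add: objective_def sum_profiles_binary principal_utility_def witness_mu_def
        witness_payment_def)
qed

text \<open>\<open>a, b, c\<close> are the probabilities of \<open>(0,0), (1,0), (1,1)\<close>; \<open>Qxy\<close> and \<open>Rxy\<close> are the
  payments to agents 0 and 1 at the played profile \<open>(x,y)\<close>.\<close>
lemma pennies_payment_lower_bound:
  fixes a b c Q00 Q01 Q10 Q11 R00 R01 R10 R11 :: real
  assumes "a \<ge> 0" "b \<ge> 0" "c \<ge> 0" "a + b + c = 1"
    and "Q00 \<ge> 0" "Q01 \<ge> 0" "Q10 \<ge> 0" "Q11 \<ge> 0" "R00 \<ge> 0" "R01 \<ge> 0" "R10 \<ge> 0" "R11 \<ge> 0"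
    and dev0_to_1: "a * (1 + Q10 - Q00) \<le> 0"
    and dev0_to_0: "b * (Q00 - 1 - Q10) + c * (1 + Q01 - Q11) \<le> 0"
    and dev1_to_1: "a * (R01 - 1 - R00) + b * (1 + R11 - R10) \<le> 0"
  shows "a * (Q00 + R00) + b * (Q10 + R10) + c * (Q11 + R11) \<ge> 1/2"
proof -
  have nonneg: "a * Q10 \<ge> 0" "a * R00 \<ge> 0" "c * Q01 \<ge> 0" "b * R11 \<ge> 0" "a * R01 \<ge> 0"
    "c * R11 \<ge> 0" "b * Q00 \<ge> 0" "b * Q10 \<ge> 0" "a * Q00 \<ge> 0" "b * R10 \<ge> 0" "c * Q11 \<ge> 0"
    using assms by simp_all
  show ?thesis
  proof (cases "a = 0")
    case True
    then show ?thesis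
      using nonneg dev0_to_0 dev1_to_1 \<open>a + b + c = 1\<close> by (simp add: algebra_simps)
  next
    case False
    then have "Q00 - 1 - Q10 \<ge> 0" using dev0_to_1 \<open>a \<ge> 0\<close> by (simp add: mult_le_0_iff)
    then have "b * (Q00 - 1 - Q10) \<ge> 0" using \<open>b \<ge> 0\<close> by simp
    then show ?thesis
      using nonneg dev0_to_1 dev0_to_0 dev1_to_1 \<open>a + b + c = 1\<close> by (simp add: algebra_simps)
  qed
qed

lemma pennies_objective_signal_independent:
  assumes CEP: "is_0CEP 2 binary_actions pennies_utility mu P"
    and sigind: "signal_independent 2 binary_actions P"
  shows "objective 2 binary_actions principal_utility mu P \<le> ereal (1/2)"
proof (cases "mu (prof2 0 1) = 0")
  case False
  with CEP have "mu (prof2 0 1) > 0"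
    by (simp add: is_0CEP_def is_cpp_def profiles_binary order_less_le)
  then show ?thesis
    by (simp add: objective_def sum_profiles_binary principal_utility_def one_ereal_def)
next
  case True
  have actions: "0 \<in> binary_actions i" "1 \<in> binary_actions i" for i
    by (simp_all add: binary_actions_def)
  note deviation = is_0CEP_signal_independent_constant_deviation[OF CEP sigind _ actions(1)]
    is_0CEP_signal_independent_constant_deviation[OF CEP sigind _ actions(2)]
  have cpp: "\<forall>a\<in>profiles 2 binary_actions. mu a \<ge> 0" "sum mu (profiles 2 binary_actions) = 1"
    "\<forall>i<2. \<forall>a\<in>profiles 2 binary_actions. P i a a \<ge> 0"
    using CEP by (auto simp: is_0CEP_def is_cpp_def)
  have dev0_to_1:
    "mu (prof2 0 0) * (1 + P 0 (prof2 1 0) (prof2 1 0) - P 0 (prof2 0 0) (prof2 0 0)) \<le> 0"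
    using deviation(2)[of 0] True
    by (simp add: sum_profiles_binary pennies_utility_def algebra_simps)
  have dev0_to_0:
    "mu (prof2 1 0) * (P 0 (prof2 0 0) (prof2 0 0) - 1 - P 0 (prof2 1 0) (prof2 1 0))
      + mu (prof2 1 1) * (1 + P 0 (prof2 0 1) (prof2 0 1) - P 0 (prof2 1 1) (prof2 1 1)) \<le> 0"
    using deviation(1)[of 0] True
    by (simp add: sum_profiles_binary pennies_utility_def algebra_simps)
  have dev1_to_1:
    "mu (prof2 0 0) * (P 1 (prof2 0 1) (prof2 0 1) - 1 - P 1 (prof2 0 0) (prof2 0 0))
      + mu (prof2 1 0) * (1 + P 1 (prof2 1 1) (prof2 1 1) - P 1 (prof2 1 0) (prof2 1 0)) \<le> 0"
    using deviation(2)[of 1] True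
    by (simp add: sum_profiles_binary pennies_utility_def algebra_simps)
  have payment: "1/2 \<le> mu (prof2 0 0) * (P 0 (prof2 0 0) (prof2 0 0) + P 1 (prof2 0 0) (prof2 0 0))
      + mu (prof2 1 0) * (P 0 (prof2 1 0) (prof2 1 0) + P 1 (prof2 1 0) (prof2 1 0))
      + mu (prof2 1 1) * (P 0 (prof2 1 1) (prof2 1 1) + P 1 (prof2 1 1) (prof2 1 1))"
    by (rule pennies_payment_lower_bound[OF _ _ _ _ _ _ _ _ _ _ _ _ dev0_to_1 dev0_to_0 dev1_to_1])
      (use cpp True in \<open>simp_all add: profiles_binary sum_profiles_binary\<close>)
  have "(\<Sum>i<2. P i a a) = P 0 a a + P 1 a a" for a
    by (simp add: numeral_2_eq_2)
  then show ?thesis using payment True cpp(2)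
    by (simp add: objective_def sum_profiles_binary principal_utility_def one_ereal_def
        algebra_simps)
qed

theorem proposition7p4:
  shows "\<exists>n Act (U :: nat \<Rightarrow> profile \<Rightarrow> real) (U0 :: profile \<Rightarrow> ereal).
           is_game n Act \<and> (\<forall>a\<in>profiles n Act. U0 a \<noteq> \<infinity>) \<and>
           opt_value_sigind n Act U U0 < opt_value n Act U U0"
proof (intro exI conjI)
  show "is_game 2 binary_actions" by (simp add: is_game_def binary_actions_def)
  show "\<forall>a\<in>profiles 2 binary_actions. principal_utility a \<noteq> \<infinity>"
    by (simp add: principal_utility_def)
  have "opt_value_sigind 2 binary_actions pennies_utility principal_utility \<le> ereal (1/2)"
    unfolding opt_value_sigind_def
    by (rule SUP_least) (auto intro: pennies_objective_signal_independent)
  also have "\<dots> < ereal (2/3)" by simp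
  also have "\<dots> \<le> opt_value 2 binary_actions pennies_utility principal_utility"
    unfolding opt_value_def
    by (rule SUP_upper2[where i = "(witness_mu, witness_payment)"])
      (simp_all add: witness_is_0CEP witness_objective)
  finally show "opt_value_sigind 2 binary_actions pennies_utility principal_utility
      < opt_value 2 binary_actions pennies_utility principal_utility" .
qed

end
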